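(* Let $\mathcal{W}$ be the weight space of an MLP and $G$ its (finite) neuron-permutation group acting linearly and orthonormally on $\mathcal{W}$ (see context). Let $q_\theta(\boldsymbol{\omega})$ be a probability density on $\mathcal{W}$ and $q_\theta^G(\boldsymbol{\omega})=\frac{1}{|G|}\sum_{g\in G}q_\theta(g^{-1}\cdot\boldsymbol{\omega})$. For an integer $K\ge1$ define $$H^K(\theta)=\mathbb{E}\left[-\log\left(\frac{1}{K}\left(q_\theta(\boldsymbol{\omega})+\sum_{j=1}^{K-1}q_\theta(g_j^{-1}\cdot\boldsymbol{\omega})\right)\right)\right],$$ where the expectation is over $\boldsymbol{\omega}\sim q_\theta$ and $g_1,\dots,g_{K-1}\sim\mathrm{uniform}(G)$ i.i.d. (independent of $\boldsymbol{\omega}$). Then (assuming the entropies involved are finite) $H^K(\theta)\le H(q_\theta^G)$ and $\lim_{K\to\infty}H^K(\theta)=H(q_\theta^G)$, where $H$ denotes differential entropy.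
   Context: The MLP weight space is $\mathcal{W}=\bigoplus_{l=1}^L(\mathbb{R}^{d_l\times d_{l-1}}\oplus\mathbb{R}^{d_l})$ with $\boldsymbol{\omega}=(\mathbf{W}_1,\dots,\mathbf{W}_L,\mathbf{b}_1,\dots,\mathbf{b}_L)$ and Euclidean norm, and $G=S_{d_1}\times\dots\times S_{d_{L-1}}$. For $g=(\tau_1,\dots,\tau_{L-1})$ with permutation matrices $\mathbf{P}_{\tau_l}$, $g\cdot\boldsymbol{\omega}$ has $\mathbf{W}_1'=\mathbf{P}_{\tau_1}^\top\mathbf{W}_1$, $\mathbf{b}_1'=\mathbf{P}_{\tau_1}^\top\mathbf{b}_1$; $\mathbf{W}_l'=\mathbf{P}_{\tau_l}^\top\mathbf{W}_l\mathbf{P}_{\tau_{l-1}}$, $\mathbf{b}_l'=\mathbf{P}_{\tau_l}^\top\mathbf{b}_l$ for $2\le l\le L-1$; $\mathbf{W}_L'=\mathbf{W}_L\mathbf{P}_{\tau_{L-1}}$, $\mathbf{b}_L'=\mathbf{b}_L$. *)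

theory Defs
  imports "HOL-Probability.Probability" "HOL-Combinatorics.Permutations"
begin

text \<open>Widths ds = [d_0, d_1, ..., d_L] (so L = length ds - 1).
  Coordinates of the MLP weight space: Wt l i j is entry (i,j) of W_l (1 <= l <= L,
  i < d_l, j < d_(l-1)); Bs l i is entry i of b_l. Indices are 0-based within a layer.\<close>

datatype widx = Wt nat nat nat | Bs nat nat

definition wIdx :: "nat list \<Rightarrow> widx set" where
  "wIdx ds = {Wt l i j | l i j. 1 \<le> l \<and> l < length ds \<and> i < ds ! l \<and> j < ds ! (l - 1)}
           \<union> {Bs l i | l i. 1 \<le> l \<and> l < length ds \<and> i < ds ! l}"

definition wspace :: "nat list \<Rightarrow> (widx \<Rightarrow> real) measure" where
  "wspace ds = PiM (wIdx ds) (\<lambda>_. lborel)"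

text \<open>G = S_{d_1} x ... x S_{d_(L-1)}: an element is a family tau with tau l a permutation
  of {0..<d_l} for 1 <= l <= L-1 and tau l = id otherwise (so tau_0 = tau_L = id).\<close>
definition permgroup :: "nat list \<Rightarrow> (nat \<Rightarrow> nat \<Rightarrow> nat) set" where
  "permgroup ds = {\<tau>. (\<forall>l. 1 \<le> l \<and> l < length ds - 1 \<longrightarrow> \<tau> l permutes {..<ds ! l})
                     \<and> (\<forall>l. \<not> (1 \<le> l \<and> l < length ds - 1) \<longrightarrow> \<tau> l = id)}"

text \<open>Action g . omega, with permutation matrices (P_tau)_{ij} = [i = tau j]:
  W_l' = P_{tau_l}^T W_l P_{tau_(l-1)} has entries W_l (tau_l i) (tau_(l-1) j),
  b_l' = P_{tau_l}^T b_l has entries b_l (tau_l i); tau_0 = tau_L = id.\<close>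
definition act :: "(nat \<Rightarrow> nat \<Rightarrow> nat) \<Rightarrow> (widx \<Rightarrow> real) \<Rightarrow> (widx \<Rightarrow> real)" where
  "act \<tau> \<omega> = (\<lambda>k. case k of
       Wt l i j \<Rightarrow> \<omega> (Wt l (\<tau> l i) (\<tau> (l - 1) j))
     | Bs l i \<Rightarrow> \<omega> (Bs l (\<tau> l i)))"

definition ginv :: "(nat \<Rightarrow> nat \<Rightarrow> nat) \<Rightarrow> (nat \<Rightarrow> nat \<Rightarrow> nat)" where
  "ginv \<tau> = (\<lambda>l. inv (\<tau> l))"

definition symdens :: "nat list \<Rightarrow> ((widx \<Rightarrow> real) \<Rightarrow> real) \<Rightarrow> (widx \<Rightarrow> real) \<Rightarrow> real" where
  "symdens ds q \<omega> = (1 / real (card (permgroup ds))) *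
      (\<Sum>g\<in>permgroup ds. q (act (ginv g) \<omega>))"

definition diff_entropy :: "'a measure \<Rightarrow> ('a \<Rightarrow> real) \<Rightarrow> real" where
  "diff_entropy M p = - (\<integral>x. p x * ln (p x) \<partial>M)"

definition gtuples :: "nat list \<Rightarrow> nat \<Rightarrow> (nat \<Rightarrow> (nat \<Rightarrow> nat \<Rightarrow> nat)) set" where
  "gtuples ds K = PiE {1..K - 1} (\<lambda>_. permgroup ds)"

definition HK_integrand :: "nat list \<Rightarrow> ((widx \<Rightarrow> real) \<Rightarrow> real) \<Rightarrow> nat
      \<Rightarrow> (nat \<Rightarrow> (nat \<Rightarrow> nat \<Rightarrow> nat)) \<Rightarrow> (widx \<Rightarrow> real) \<Rightarrow> real" where
  "HK_integrand ds q K gs \<omega> =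
     - ln ((1 / real K) * (q \<omega> + (\<Sum>j=1..K - 1. q (act (ginv (gs j)) \<omega>))))"

text \<open>H^K(theta): expectation over omega ~ q (density q w.r.t. Lebesgue measure) and
  g_1..g_(K-1) iid uniform on G (a uniform average over G^(K-1)).\<close>
definition HK :: "nat list \<Rightarrow> ((widx \<Rightarrow> real) \<Rightarrow> real) \<Rightarrow> nat \<Rightarrow> real" where
  "HK ds q K = (\<integral>\<omega>. q \<omega> * ((1 / real (card (gtuples ds K))) *
        (\<Sum>gs\<in>gtuples ds K. HK_integrand ds q K gs \<omega>)) \<partial>wspace ds)"

end

theory Submission
  imports Defs
begin

(* Write p_g(omega) = q(g^-1 . omega). The substitutions omega -> h^-1 . omega (a coordinate
   permutation, so Lebesgue measure is preserved) and g_j -> g_j h (a bijection of G^(K-1)) turn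
   |G| |G^(K-1)| H^K into the integral of the sum over h and g_1, ..., g_(K-1) of
   p_h * -log (S / K), where S = p_h + p_(g_1) + ... + p_(g_(K-1)).
   As h, g_1, ..., g_(K-1) are exchangeable, this sum equals that of -(S / K) log (S / K), and
   S / K averages to q^G(omega); Jensen's inequality for x log x gives H^K <= H(q^G).
   Averaging S / K over the g_j alone gives (p_h + (K - 1) q^G) / K <= q^G (1 + |G| / K), so
   Jensen's inequality for -log gives H^K >= H(q^G) - log (1 + |G| / K), and the limit follows
   by squeezing. *)

lemma sum_PiE_swap_component:
  fixes F :: "'g \<Rightarrow> ('i \<Rightarrow> 'g) \<Rightarrow> 'a::comm_monoid_add"
  assumes j: "j \<in> I"
  shows "(\<Sum>h\<in>G. \<Sum>gs\<in>PiE I (\<lambda>_. G). F h gs)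
       = (\<Sum>h\<in>G. \<Sum>gs\<in>PiE I (\<lambda>_. G). F (gs j) (gs(j := h)))"
proof -
  let ?T = "PiE I (\<lambda>_. G)"
  let ?swap = "\<lambda>(h, gs). (gs j, gs(j := h))"
  have "(\<Sum>(h, gs)\<in>G \<times> ?T. F h gs) = (\<Sum>(h, gs)\<in>G \<times> ?T. F (gs j) (gs(j := h)))"
    by (rule sum.reindex_bij_witness[of _ ?swap ?swap])
       (use j in \<open>auto simp: PiE_iff extensional_def\<close>)
  then show ?thesis
    by (simp only: sum.cartesian_product)
qed

lemma sum_update_exchange:
  fixes p :: "'i \<Rightarrow> 'a::comm_monoid_add"
  assumes "finite I" "j \<in> I"
  shows "p (gs j) + (\<Sum>i\<in>I. p ((gs(j := h)) i)) = p h + (\<Sum>i\<in>I. p (gs i))"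
proof -
  have "(\<Sum>i\<in>I - {j}. p ((gs(j := h)) i)) = (\<Sum>i\<in>I - {j}. p (gs i))"
    by (rule sum.cong) auto
  then show ?thesis
    using sum.remove[OF assms, of "\<lambda>i. p ((gs(j := h)) i)"] sum.remove[OF assms, of "\<lambda>i. p (gs i)"]
    by (simp add: add_ac)
qed

lemma xlnx_ge_tangent:
  fixes x m :: real
  assumes "0 \<le> x" "0 < m"
  shows "m * ln m + (1 + ln m) * (x - m) \<le> x * ln x"
proof (cases "x = 0")
  case False
  with assms have "ln (m / x) \<le> m / x - 1"
    by (intro ln_le_minus_one) simp
  with assms False have "x * (ln m - ln x) \<le> x * (m / x - 1)"
    by (intro mult_left_mono) (auto simp: ln_div)
  with assms False show ?thesis
    by (simp add: algebra_simps)
qed (use assms in simp)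

lemma card_mult_mean_xlnx_le_sum:
  fixes y :: "'i \<Rightarrow> real"
  assumes "finite A" and "\<And>i. i \<in> A \<Longrightarrow> 0 \<le> y i"
  defines "m \<equiv> sum y A / card A"
  shows "card A * (m * ln m) \<le> (\<Sum>i\<in>A. y i * ln (y i))"
proof (cases "m = 0")
  case False
  with assms have "0 < m"
    by (simp add: m_def sum_nonneg less_le)
  then have "(\<Sum>i\<in>A. m * ln m + (1 + ln m) * (y i - m)) \<le> (\<Sum>i\<in>A. y i * ln (y i))"
    by (intro sum_mono xlnx_ge_tangent assms)
  moreover have "(\<Sum>i\<in>A. y i - m) = 0"
    using False by (simp add: sum_subtractf m_def)
  ultimately show ?thesis
    by (simp add: sum.distrib sum_distrib_left[symmetric])
next
  case True
  with assms have "\<forall>i\<in>A. y i = 0"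
    by (auto simp: m_def sum_nonneg_eq_0_iff)
  with True show ?thesis
    by simp
qed

lemma card_mult_neg_ln_mean_le_sum:
  fixes y :: "'i \<Rightarrow> real"
  assumes "finite A" "A \<noteq> {}" and "\<And>i. i \<in> A \<Longrightarrow> 0 < y i"
  shows "- (card A * ln (sum y A / card A)) \<le> (\<Sum>i\<in>A. - ln (y i))"
proof -
  have "convex_on {0<..} (\<lambda>x. - ln x)"
    using ln_concave by (simp add: concave_on_def)
  then have "- ln (\<Sum>i\<in>A. (1 / card A) *\<^sub>R y i) \<le> (\<Sum>i\<in>A. (1 / card A) * - ln (y i))"
    using assms by (intro convex_on_sum) auto
  then have "- ln (sum y A / card A) \<le> (\<Sum>i\<in>A. - ln (y i)) / card A"
    by (simp add: sum_divide_distrib[symmetric] sum_distrib_left[symmetric] sum_negf)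
  moreover have "0 < real (card A)"
    using assms by (simp add: card_gt_0_iff)
  ultimately show ?thesis
    by (simp add: pos_le_divide_eq mult.commute)
qed

(* Used with p g = q(g^-1 . omega) for a fixed omega, so that mean = q^G(omega). *)
locale tuple_average =
  fixes G :: "'g set" and p :: "'g \<Rightarrow> real" and K :: nat
  assumes finite_G: "finite G" and G_ne: "G \<noteq> {}"
    and p_nonneg: "\<And>g. g \<in> G \<Longrightarrow> 0 \<le> p g" and K_ge_1: "1 \<le> K"
begin

definition tuples :: "(nat \<Rightarrow> 'g) set" where
  "tuples = PiE {1..K - 1} (\<lambda>_. G)"

definition total :: "'g \<Rightarrow> (nat \<Rightarrow> 'g) \<Rightarrow> real" where
  "total h gs = p h + (\<Sum>j=1..K - 1. p (gs j))"

definition mean :: real where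
  "mean = sum p G / card G"

lemma finite_tuples: "finite tuples"
  unfolding tuples_def using finite_G by (simp add: finite_PiE)

lemma tuples_ne: "tuples \<noteq> {}"
  using G_ne by (simp add: tuples_def PiE_eq_empty_iff)

lemma card_tuples_pos: "0 < card tuples"
  using finite_tuples tuples_ne by (simp add: card_gt_0_iff)

lemma card_G_pos: "0 < card G"
  using finite_G G_ne by (simp add: card_gt_0_iff)

lemma sum_p_eq: "sum p G = card G * mean"
  using card_G_pos by (simp add: mean_def)

lemma mean_nonneg: "0 \<le> mean"
  using finite_G p_nonneg by (simp add: mean_def sum_nonneg)

lemma p_le_card_mult_mean: "h \<in> G \<Longrightarrow> p h \<le> card G * mean"
  using member_le_sum[of h G p] finite_G p_nonneg by (simp add: sum_p_eq)

lemma p_le_total: "gs \<in> tuples \<Longrightarrow> p h \<le> total h gs"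
  unfolding total_def tuples_def using p_nonneg by (auto intro!: sum_nonneg)

(* Exchangeability of h, gs 1, ..., gs (K - 1): each of the K summands of total h gs
   contributes the same amount. *)
lemma sum_total_mult_eq:
  "(\<Sum>h\<in>G. \<Sum>gs\<in>tuples. total h gs * \<psi> (total h gs))
     = K * (\<Sum>h\<in>G. \<Sum>gs\<in>tuples. p h * \<psi> (total h gs))"
proof -
  let ?Z = "\<Sum>h\<in>G. \<Sum>gs\<in>tuples. p h * \<psi> (total h gs)"
  have component: "(\<Sum>h\<in>G. \<Sum>gs\<in>tuples. p (gs j) * \<psi> (total h gs)) = ?Z"
    if j: "j \<in> {1..K - 1}" for j
    using sum_PiE_swap_component[OF j, where G = G and F = "\<lambda>h gs. p h * \<psi> (total h gs)"]
      sum_update_exchange[OF _ j, of p]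
    by (simp add: tuples_def total_def)
  have "(\<Sum>h\<in>G. \<Sum>gs\<in>tuples. total h gs * \<psi> (total h gs))
      = ?Z + (\<Sum>h\<in>G. \<Sum>gs\<in>tuples. \<Sum>j=1..K - 1. p (gs j) * \<psi> (total h gs))"
    by (simp add: total_def distrib_right sum_distrib_right sum.distrib)
  also have "\<dots> = ?Z + (\<Sum>h\<in>G. \<Sum>j=1..K - 1. \<Sum>gs\<in>tuples. p (gs j) * \<psi> (total h gs))"
    by (simp only: sum.swap[of _ tuples])
  also have "\<dots> = ?Z + (\<Sum>j=1..K - 1. \<Sum>h\<in>G. \<Sum>gs\<in>tuples. p (gs j) * \<psi> (total h gs))"
    by (simp only: sum.swap[of _ G])
  also have "\<dots> = K * ?Z"
    using K_ge_1 by (simp add: component algebra_simps)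
  finally show ?thesis .
qed

lemma sum_tuples_component:
  assumes "j \<in> {1..K - 1}"
  shows "(\<Sum>gs\<in>tuples. p (gs j)) = card tuples * mean"
proof -
  have "card tuples * sum p G = card G * (\<Sum>gs\<in>tuples. p (gs j))"
    using sum_PiE_swap_component[OF assms, where G = G and F = "\<lambda>h gs. p h"]
    by (simp add: tuples_def sum_distrib_left sum_distrib_right mult.commute)
  then show ?thesis
    using card_G_pos by (simp add: mean_def field_simps)
qed

lemma sum_tuples_total: "(\<Sum>gs\<in>tuples. total h gs) = card tuples * (p h + (K - 1) * mean)"
proof -
  have "(\<Sum>gs\<in>tuples. \<Sum>j=1..K - 1. p (gs j)) = (\<Sum>j=1..K - 1. \<Sum>gs\<in>tuples. p (gs j))"
    by (rule sum.swap)
  also have "\<dots> = (K - 1) * (card tuples * mean)"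
    by (simp add: sum_tuples_component)
  finally show ?thesis
    using K_ge_1 by (simp add: total_def sum.distrib algebra_simps)
qed

lemma sum_neg_ln_total_le:
  "(\<Sum>h\<in>G. \<Sum>gs\<in>tuples. p h * - ln (total h gs / K)) \<le> - (card G * card tuples) * (mean * ln mean)"
proof -
  define y where "y x = total (fst x) (snd x) / K" for x
  have K_pos: "0 < real K"
    using K_ge_1 by simp
  have "K * (\<Sum>h\<in>G. \<Sum>gs\<in>tuples. p h * - ln (total h gs / K))
      = (\<Sum>h\<in>G. \<Sum>gs\<in>tuples. total h gs * - ln (total h gs / K))"
    by (rule sum_total_mult_eq[symmetric])
  also have "\<dots> = K * - (\<Sum>x\<in>G \<times> tuples. y x * ln (y x))"
    using K_pos by (simp add: y_def sum.cartesian_product' sum_distrib_left sum_negf)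
  finally have Z: "(\<Sum>h\<in>G. \<Sum>gs\<in>tuples. p h * - ln (total h gs / K))
      = - (\<Sum>x\<in>G \<times> tuples. y x * ln (y x))"
    by (rule mult_left_cancel[THEN iffD1, rotated]) (use K_pos in simp)
  have "K * sum y (G \<times> tuples) = (\<Sum>h\<in>G. \<Sum>gs\<in>tuples. total h gs * 1)"
    using K_pos by (simp add: y_def sum.cartesian_product' sum_distrib_left)
  also have "\<dots> = K * (card tuples * sum p G)"
    by (subst sum_total_mult_eq) (simp add: sum_distrib_left)
  finally have "sum y (G \<times> tuples) / card (G \<times> tuples) = mean"
    using K_pos card_G_pos card_tuples_pos by (simp add: card_cartesian_product mean_def field_simps)
  moreover have "0 \<le> y x" if "x \<in> G \<times> tuples" for x
    using that p_le_total[of "snd x" "fst x"] p_nonneg[of "fst x"] K_pos by (auto simp: y_def)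
  ultimately have "card (G \<times> tuples) * (mean * ln mean) \<le> (\<Sum>x\<in>G \<times> tuples. y x * ln (y x))"
    using card_mult_mean_xlnx_le_sum[of "G \<times> tuples" y] finite_G finite_tuples by simp
  with Z show ?thesis
    by (simp add: card_cartesian_product)
qed

lemma mean_pos:
  assumes "h \<in> G" "0 < p h"
  shows "0 < mean"
proof -
  have "0 < card G * mean"
    using p_le_card_mult_mean[OF assms(1)] assms(2) by linarith
  then show ?thesis
    by (simp add: zero_less_mult_iff)
qed

lemma average_total_le:
  assumes "h \<in> G"
  shows "(\<Sum>gs\<in>tuples. total h gs / K) / card tuples \<le> mean * (1 + card G / K)"
proof -
  have K_pos: "0 < real K"
    using K_ge_1 by simp
  have "(\<Sum>gs\<in>tuples. total h gs / K) / card tuples = (p h + (K - 1) * mean) / K"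
    using card_tuples_pos by (simp add: sum_divide_distrib[symmetric] sum_tuples_total)
  also have "\<dots> \<le> (card G * mean + K * mean) / K"
    using p_le_card_mult_mean[OF assms] mean_nonneg K_pos by (intro divide_right_mono) (auto simp: algebra_simps)
  also have "\<dots> = mean * (1 + card G / K)"
    using K_pos by (simp add: field_simps)
  finally show ?thesis .
qed

lemma card_mult_neg_ln_le_sum_neg_ln_total:
  assumes h: "h \<in> G" and p_pos: "0 < p h"
  shows "- (card tuples * (ln mean + ln (1 + card G / K))) \<le> (\<Sum>gs\<in>tuples. - ln (total h gs / K))"
proof -
  define B where "B = (\<Sum>gs\<in>tuples. total h gs / K) / card tuples"
  have total_pos: "0 < total h gs / K" if "gs \<in> tuples" for gs
    using p_le_total[OF that, of h] p_pos K_ge_1 by simp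
  then have "0 < B"
    unfolding B_def using card_tuples_pos
    by (intro divide_pos_pos sum_pos finite_tuples tuples_ne total_pos) simp_all
  then have "ln B \<le> ln (mean * (1 + card G / K))"
    using average_total_le[OF h] by (simp add: B_def)
  also have "\<dots> = ln mean + ln (1 + card G / K)"
    using mean_pos[OF h p_pos] by (intro ln_mult_pos) (auto intro: add_pos_nonneg)
  finally have "card tuples * ln B \<le> card tuples * (ln mean + ln (1 + card G / K))"
    by (rule mult_left_mono) simp
  moreover have "- (card tuples * ln B) \<le> (\<Sum>gs\<in>tuples. - ln (total h gs / K))"
    unfolding B_def by (rule card_mult_neg_ln_mean_le_sum[OF finite_tuples tuples_ne total_pos])
  ultimately show ?thesis
    by linarith
qed

lemma sum_neg_ln_total_ge:
  "- (card G * card tuples) * (mean * ln mean + mean * ln (1 + card G / K))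
     \<le> (\<Sum>h\<in>G. \<Sum>gs\<in>tuples. p h * - ln (total h gs / K))"
proof -
  let ?c = "ln mean + ln (1 + card G / K)"
  have "p h * - (card tuples * ?c) \<le> p h * (\<Sum>gs\<in>tuples. - ln (total h gs / K))"
    if h: "h \<in> G" for h
  proof (cases "p h = 0")
    case False
    with p_nonneg[OF h] have "0 < p h"
      by simp
    then show ?thesis
      by (intro mult_left_mono card_mult_neg_ln_le_sum_neg_ln_total[OF h]) simp_all
  qed simp
  then have "(\<Sum>h\<in>G. p h * - (card tuples * ?c))
      \<le> (\<Sum>h\<in>G. \<Sum>gs\<in>tuples. p h * - ln (total h gs / K))"
    by (simp only: sum_distrib_left[symmetric]) (rule sum_mono)
  moreover have "(\<Sum>h\<in>G. p h * - (card tuples * ?c)) = - (card G * card tuples) * (mean * ?c)"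
    by (simp only: sum_distrib_right[symmetric] sum_p_eq) (simp add: algebra_simps)
  ultimately show ?thesis
    by (simp add: algebra_simps)
qed

end

lemma measurable_comp_bij_PiM:
  assumes "bij_betw \<sigma> I I" and "\<And>i. i \<notin> I \<Longrightarrow> \<sigma> i \<notin> I"
  shows "(\<lambda>\<omega>. \<omega> \<circ> \<sigma>) \<in> PiM I (\<lambda>_. M) \<rightarrow>\<^sub>M PiM I (\<lambda>_. M)"
proof -
  have \<sigma>_in: "\<sigma> i \<in> I" if "i \<in> I" for i
    using assms(1) that by (auto simp: bij_betw_def)
  show ?thesis
    unfolding comp_def
    by (rule measurable_PiM_single')
       (use \<sigma>_in assms(2) in \<open>auto simp: space_PiM PiE_iff extensional_def\<close>)
qed

lemma vimage_comp_bij_PiE: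
  assumes bij: "bij_betw \<sigma> I I" and outside: "\<And>i. i \<notin> I \<Longrightarrow> \<sigma> i \<notin> I"
    and A: "\<And>i. i \<in> I \<Longrightarrow> A i \<subseteq> space M"
  shows "(\<lambda>\<omega>. \<omega> \<circ> \<sigma>) -` PiE I A \<inter> space (PiM I (\<lambda>_. M)) = PiE I (\<lambda>i. A (inv_into I \<sigma> i))"
proof (intro set_eqI iffI)
  have inv: "\<sigma> i \<in> I" "inv_into I \<sigma> (\<sigma> i) = i" "\<sigma> (inv_into I \<sigma> i) = i" "inv_into I \<sigma> i \<in> I"
    if "i \<in> I" for i
    using bij that by (auto simp: bij_betw_def inv_into_into f_inv_into_f)
  fix \<omega>
  {
    assume "\<omega> \<in> (\<lambda>\<omega>. \<omega> \<circ> \<sigma>) -` PiE I A \<inter> space (PiM I (\<lambda>_. M))"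
    then have comp: "\<forall>i\<in>I. \<omega> (\<sigma> i) \<in> A i" and ext: "\<omega> \<in> extensional I"
      by (auto simp: space_PiM PiE_iff)
    show "\<omega> \<in> PiE I (\<lambda>i. A (inv_into I \<sigma> i))"
    proof (rule PiE_I)
      fix k assume "k \<in> I"
      with comp inv(3,4)[of k] show "\<omega> k \<in> A (inv_into I \<sigma> k)"
        by metis
    qed (use ext in \<open>simp add: extensional_def\<close>)
  next
    assume "\<omega> \<in> PiE I (\<lambda>i. A (inv_into I \<sigma> i))"
    then have comp: "\<forall>i\<in>I. \<omega> i \<in> A (inv_into I \<sigma> i)" and ext: "\<omega> \<in> extensional I"
      by (auto simp: PiE_iff)
    have "\<omega> \<circ> \<sigma> \<in> PiE I A"
    proof (rule PiE_I)
      fix i assume "i \<in> I"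
      with comp inv(1,2)[of i] show "(\<omega> \<circ> \<sigma>) i \<in> A i"
        by force
    qed (use ext outside in \<open>simp add: extensional_def\<close>)
    moreover have "\<omega> \<in> space (PiM I (\<lambda>_. M))"
      using comp ext A inv(4) by (auto simp: space_PiM PiE_iff)
    ultimately show "\<omega> \<in> (\<lambda>\<omega>. \<omega> \<circ> \<sigma>) -` PiE I A \<inter> space (PiM I (\<lambda>_. M))"
      by simp
  }
qed

lemma distr_comp_bij_PiM:
  fixes M :: "'a measure" and \<sigma> :: "'i \<Rightarrow> 'i"
  assumes "finite I" "sigma_finite_measure M"
    and bij: "bij_betw \<sigma> I I" and outside: "\<And>i. i \<notin> I \<Longrightarrow> \<sigma> i \<notin> I"
  shows "distr (PiM I (\<lambda>_. M)) (PiM I (\<lambda>_. M)) (\<lambda>\<omega>. \<omega> \<circ> \<sigma>) = PiM I (\<lambda>_. M)"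
proof -
  interpret product_sigma_finite "\<lambda>_. M"
    using assms(2) by (simp add: product_sigma_finite_def)
  show ?thesis
  proof (rule PiM_eqI[OF \<open>finite I\<close>])
    fix A assume A: "\<And>i. i \<in> I \<Longrightarrow> A i \<in> sets M"
    have "emeasure (distr (PiM I (\<lambda>_. M)) (PiM I (\<lambda>_. M)) (\<lambda>\<omega>. \<omega> \<circ> \<sigma>)) (PiE I A)
        = emeasure (PiM I (\<lambda>_. M)) (PiE I (\<lambda>i. A (inv_into I \<sigma> i)))"
      using A \<open>finite I\<close>
      by (simp add: emeasure_distr measurable_comp_bij_PiM[OF bij outside] sets_PiM_I_finite
          vimage_comp_bij_PiE[OF bij outside sets.sets_into_space])
    also have "\<dots> = (\<Prod>i\<in>I. emeasure M (A (inv_into I \<sigma> i)))"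
      using A bij \<open>finite I\<close> by (intro emeasure_PiM) (auto simp: bij_betw_def inv_into_into)
    also have "\<dots> = (\<Prod>i\<in>I. emeasure M (A i))"
      using bij by (intro prod.reindex_bij_betw bij_betw_inv_into)
    finally show "emeasure (distr (PiM I (\<lambda>_. M)) (PiM I (\<lambda>_. M)) (\<lambda>\<omega>. \<omega> \<circ> \<sigma>)) (PiE I A)
        = (\<Prod>i\<in>I. emeasure M (A i))" .
  qed simp
qed

definition gmul :: "(nat \<Rightarrow> nat \<Rightarrow> nat) \<Rightarrow> (nat \<Rightarrow> nat \<Rightarrow> nat) \<Rightarrow> (nat \<Rightarrow> nat \<Rightarrow> nat)" where
  "gmul g h = (\<lambda>l. g l \<circ> h l)"

lemma gmul_assoc: "gmul (gmul a b) c = gmul a (gmul b c)"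
  by (simp add: gmul_def comp_assoc)

lemma gmul_id_right [simp]: "gmul a (\<lambda>l. id) = a"
  by (simp add: gmul_def)

lemma id_in_permgroup: "(\<lambda>l. id) \<in> permgroup ds"
  unfolding permgroup_def by (auto intro: permutes_id)

lemma permgroup_ne: "permgroup ds \<noteq> {}"
  using id_in_permgroup by blast

lemma gmul_in_permgroup: "g \<in> permgroup ds \<Longrightarrow> h \<in> permgroup ds \<Longrightarrow> gmul g h \<in> permgroup ds"
  unfolding permgroup_def gmul_def by (auto intro: permutes_compose)

lemma ginv_in_permgroup: "\<tau> \<in> permgroup ds \<Longrightarrow> ginv \<tau> \<in> permgroup ds"
  unfolding permgroup_def ginv_def by (auto intro: permutes_inv)

lemma bij_permgroup: "\<tau> \<in> permgroup ds \<Longrightarrow> bij (\<tau> l)"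
  unfolding permgroup_def by (cases "1 \<le> l \<and> l < length ds - 1") (auto intro: permutes_bij)

lemma gmul_ginv_left: "\<tau> \<in> permgroup ds \<Longrightarrow> gmul (ginv \<tau>) \<tau> = (\<lambda>l. id)"
  using bij_permgroup by (auto simp: gmul_def ginv_def bij_def)

lemma gmul_ginv_right: "\<tau> \<in> permgroup ds \<Longrightarrow> gmul \<tau> (ginv \<tau>) = (\<lambda>l. id)"
  using bij_permgroup by (auto simp: gmul_def ginv_def bij_def surj_iff)

lemma ginv_gmul:
  "g \<in> permgroup ds \<Longrightarrow> h \<in> permgroup ds \<Longrightarrow> ginv (gmul g h) = gmul (ginv h) (ginv g)"
  using bij_permgroup by (auto simp: ginv_def gmul_def o_inv_distrib)

lemma finite_permgroup: "finite (permgroup ds)"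
proof -
  let ?L = "{1..<length ds - 1}"
  let ?P = "\<Union>l\<in>?L. {p. p permutes {..<ds ! l}}"
  have "permgroup ds \<subseteq> {\<tau>. \<forall>l. (l \<in> ?L \<longrightarrow> \<tau> l \<in> ?P) \<and> (l \<notin> ?L \<longrightarrow> \<tau> l = id)}"
    unfolding permgroup_def by auto
  moreover have "finite ?P"
    by (auto intro: finite_permutations)
  ultimately show ?thesis
    using finite_set_of_finite_funs[of ?L ?P id] by (auto intro: finite_subset)
qed

lemma card_permgroup_pos: "0 < card (permgroup ds)"
  using finite_permgroup permgroup_ne by (simp add: card_gt_0_iff)

definition widx_perm :: "(nat \<Rightarrow> nat \<Rightarrow> nat) \<Rightarrow> widx \<Rightarrow> widx" where
  "widx_perm \<tau> k = (case k of Wt l i j \<Rightarrow> Wt l (\<tau> l i) (\<tau> (l - 1) j) | Bs l i \<Rightarrow> Bs l (\<tau> l i))"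

lemma act_eq_comp: "act \<tau> = (\<lambda>\<omega>. \<omega> \<circ> widx_perm \<tau>)"
  by (auto simp: act_def widx_perm_def fun_eq_iff split: widx.split)

lemma widx_perm_widx_perm: "widx_perm g (widx_perm h k) = widx_perm (gmul g h) k"
  by (simp add: widx_perm_def gmul_def split: widx.split)

lemma widx_perm_id [simp]: "widx_perm (\<lambda>l. id) k = k"
  by (simp add: widx_perm_def split: widx.split)

lemma act_act: "act g (act h \<omega>) = act (gmul h g) \<omega>"
  by (simp add: act_eq_comp comp_def widx_perm_widx_perm)

lemma widx_perm_ginv_left: "\<tau> \<in> permgroup ds \<Longrightarrow> widx_perm (ginv \<tau>) (widx_perm \<tau> k) = k"
  by (simp add: widx_perm_widx_perm gmul_ginv_left)

lemma widx_perm_ginv_right: "\<tau> \<in> permgroup ds \<Longrightarrow> widx_perm \<tau> (widx_perm (ginv \<tau>) k) = k"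
  by (simp add: widx_perm_widx_perm gmul_ginv_right)

lemma widx_perm_in_wIdx:
  assumes "\<tau> \<in> permgroup ds" and "k \<in> wIdx ds"
  shows "widx_perm \<tau> k \<in> wIdx ds"
proof -
  have "\<tau> l i < ds ! l" if "i < ds ! l" for l i
    using assms(1) that unfolding permgroup_def
    by (cases "1 \<le> l \<and> l < length ds - 1") (auto dest: permutes_in_image)
  with assms(2) show ?thesis
    by (auto simp: wIdx_def widx_perm_def)
qed

lemma bij_betw_widx_perm: "\<tau> \<in> permgroup ds \<Longrightarrow> bij_betw (widx_perm \<tau>) (wIdx ds) (wIdx ds)"
  by (rule bij_betw_byWitness[where f' = "widx_perm (ginv \<tau>)"])
     (auto simp: widx_perm_ginv_left widx_perm_ginv_right intro: widx_perm_in_wIdx ginv_in_permgroup)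

lemma widx_perm_notin_wIdx: "\<tau> \<in> permgroup ds \<Longrightarrow> k \<notin> wIdx ds \<Longrightarrow> widx_perm \<tau> k \<notin> wIdx ds"
  by (metis widx_perm_ginv_left widx_perm_in_wIdx ginv_in_permgroup)

lemma finite_wIdx: "finite (wIdx ds)"
proof -
  let ?L = "{..<length ds}" and ?D = "{..<Max (set ds) + 1}"
  have D: "ds ! l \<in> ?D" if "l < length ds" for l
    using that by (simp add: le_imp_less_Suc)
  have "wIdx ds \<subseteq> (\<lambda>(l, i, j). Wt l i j) ` (?L \<times> ?D \<times> ?D) \<union> (\<lambda>(l, i). Bs l i) ` (?L \<times> ?D)"
  proof
    fix k assume "k \<in> wIdx ds"
    then consider (W) l i j where "k = Wt l i j" "l < length ds" "i < ds ! l" "j < ds ! (l - 1)"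
      | (B) l i where "k = Bs l i" "l < length ds" "i < ds ! l"
      unfolding wIdx_def by blast
    then show "k \<in> (\<lambda>(l, i, j). Wt l i j) ` (?L \<times> ?D \<times> ?D) \<union> (\<lambda>(l, i). Bs l i) ` (?L \<times> ?D)"
    proof cases
      case W
      with D[of l] D[of "l - 1"] have "(l, i, j) \<in> ?L \<times> ?D \<times> ?D"
        by (auto dest: less_imp_diff_less[of l _ 1])
      with W show ?thesis
        by (intro UnI1 image_eqI[where x = "(l, i, j)"]) auto
    next
      case B
      with D[of l] have "(l, i) \<in> ?L \<times> ?D"
        by auto
      with B show ?thesis
        by (intro UnI2 image_eqI[where x = "(l, i)"]) auto
    qed
  qed
  then show ?thesis
    by (rule finite_subset) auto
qed

lemma measurable_act: "\<tau> \<in> permgroup ds \<Longrightarrow> act \<tau> \<in> wspace ds \<rightarrow>\<^sub>M wspace ds"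
  unfolding act_eq_comp wspace_def
  by (rule measurable_comp_bij_PiM[OF bij_betw_widx_perm widx_perm_notin_wIdx])

lemma distr_act: "\<tau> \<in> permgroup ds \<Longrightarrow> distr (wspace ds) (wspace ds) (act \<tau>) = wspace ds"
  unfolding act_eq_comp wspace_def
  by (rule distr_comp_bij_PiM[OF finite_wIdx _ bij_betw_widx_perm widx_perm_notin_wIdx])
     (simp add: lborel.sigma_finite_measure_axioms)

lemma
  fixes f :: "(widx \<Rightarrow> real) \<Rightarrow> real"
  assumes \<tau>: "\<tau> \<in> permgroup ds" and f: "integrable (wspace ds) f"
  shows integrable_act: "integrable (wspace ds) (\<lambda>\<omega>. f (act \<tau> \<omega>))"
    and integral_act: "(\<integral>\<omega>. f (act \<tau> \<omega>) \<partial>wspace ds) = (\<integral>\<omega>. f \<omega> \<partial>wspace ds)"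
proof -
  have f_meas: "f \<in> borel_measurable (wspace ds)"
    using f by simp
  show "integrable (wspace ds) (\<lambda>\<omega>. f (act \<tau> \<omega>))"
    using integrable_distr_eq[OF measurable_act[OF \<tau>] f_meas] distr_act[OF \<tau>] f by simp
  show "(\<integral>\<omega>. f (act \<tau> \<omega>) \<partial>wspace ds) = (\<integral>\<omega>. f \<omega> \<partial>wspace ds)"
    using integral_distr[OF measurable_act[OF \<tau>] f_meas] distr_act[OF \<tau>] by simp
qed

lemma finite_gtuples: "finite (gtuples ds K)"
  by (simp add: gtuples_def finite_PiE finite_permgroup)

lemma card_gtuples_pos: "0 < card (gtuples ds K)"
  using finite_gtuples permgroup_ne by (simp add: card_gt_0_iff gtuples_def PiE_eq_empty_iff)

lemma sum_gtuples_reindex_gmul: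
  assumes h: "h \<in> permgroup ds"
  shows "(\<Sum>gs\<in>gtuples ds K. F (\<lambda>j\<in>{1..K - 1}. gmul (gs j) h)) = (\<Sum>gs\<in>gtuples ds K. F gs)"
proof (rule sum.reindex_bij_witness[where i = "\<lambda>gs. \<lambda>j\<in>{1..K - 1}. gmul (gs j) (ginv h)"
      and j = "\<lambda>gs. \<lambda>j\<in>{1..K - 1}. gmul (gs j) h"])
  fix gs assume "gs \<in> gtuples ds K"
  with h show "(\<lambda>j\<in>{1..K - 1}. gmul ((\<lambda>j\<in>{1..K - 1}. gmul (gs j) h) j) (ginv h)) = gs"
    and "(\<lambda>j\<in>{1..K - 1}. gmul ((\<lambda>j\<in>{1..K - 1}. gmul (gs j) (ginv h)) j) h) = gs"
    by (auto simp: gtuples_def gmul_assoc gmul_ginv_left gmul_ginv_right PiE_iff extensional_def)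
  from \<open>gs \<in> gtuples ds K\<close> h show "(\<lambda>j\<in>{1..K - 1}. gmul (gs j) h) \<in> gtuples ds K"
    and "(\<lambda>j\<in>{1..K - 1}. gmul (gs j) (ginv h)) \<in> gtuples ds K"
    by (auto simp: gtuples_def intro: gmul_in_permgroup ginv_in_permgroup)
qed simp

definition HK_orbit_sum :: "nat list \<Rightarrow> ((widx \<Rightarrow> real) \<Rightarrow> real) \<Rightarrow> nat \<Rightarrow> (widx \<Rightarrow> real) \<Rightarrow> real" where
  "HK_orbit_sum ds q K \<omega> = (\<Sum>h\<in>permgroup ds. \<Sum>gs\<in>gtuples ds K. q (act (ginv h) \<omega>) *
      - ln ((q (act (ginv h) \<omega>) + (\<Sum>j=1..K - 1. q (act (ginv (gs j)) \<omega>))) / K))"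

lemma HK_orbit_sum_eq_sum_act:
  "HK_orbit_sum ds q K \<omega> = (\<Sum>h\<in>permgroup ds. \<Sum>gs\<in>gtuples ds K.
      q (act (ginv h) \<omega>) * HK_integrand ds q K gs (act (ginv h) \<omega>))"
  unfolding HK_orbit_sum_def
proof (rule sum.cong[OF refl])
  fix h assume h: "h \<in> permgroup ds"
  let ?term = "\<lambda>gs. q (act (ginv h) \<omega>) *
      - ln ((q (act (ginv h) \<omega>) + (\<Sum>j=1..K - 1. q (act (ginv (gs j)) \<omega>))) / K)"
  have "q (act (ginv h) \<omega>) * HK_integrand ds q K gs (act (ginv h) \<omega>)
      = ?term (\<lambda>j\<in>{1..K - 1}. gmul (gs j) h)" if "gs \<in> gtuples ds K" for gs
  proof -
    have "q (act (ginv (gs j)) (act (ginv h) \<omega>)) = q (act (ginv (gmul (gs j) h)) \<omega>)"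
      if "j \<in> {1..K - 1}" for j
    proof -
      have "gs j \<in> permgroup ds"
        using \<open>gs \<in> gtuples ds K\<close> that by (auto simp: gtuples_def)
      with h show ?thesis
        by (simp add: act_act ginv_gmul)
    qed
    then show ?thesis
      by (simp add: HK_integrand_def)
  qed
  then show "(\<Sum>gs\<in>gtuples ds K. ?term gs) = (\<Sum>gs\<in>gtuples ds K.
      q (act (ginv h) \<omega>) * HK_integrand ds q K gs (act (ginv h) \<omega>))"
    using sum_gtuples_reindex_gmul[OF h, of ?term K] by simp
qed

lemma
  assumes fin_HK: "\<forall>gs\<in>gtuples ds K. integrable (wspace ds) (\<lambda>\<omega>. q \<omega> * HK_integrand ds q K gs \<omega>)"
  shows integrable_HK_orbit_sum: "integrable (wspace ds) (HK_orbit_sum ds q K)"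
    and HK_eq_integral_HK_orbit_sum:
      "HK ds q K = (\<integral>\<omega>. HK_orbit_sum ds q K \<omega> \<partial>wspace ds) / (card (permgroup ds) * card (gtuples ds K))"
proof -
  define F where "F = (\<lambda>gs \<omega>. q \<omega> * HK_integrand ds q K gs \<omega>)"
  have F: "integrable (wspace ds) (F gs)" if "gs \<in> gtuples ds K" for gs
    using fin_HK that by (simp add: F_def)
  have F_act: "integrable (wspace ds) (\<lambda>\<omega>. F gs (act (ginv h) \<omega>))"
      "(\<integral>\<omega>. F gs (act (ginv h) \<omega>) \<partial>wspace ds) = (\<integral>\<omega>. F gs \<omega> \<partial>wspace ds)"
    if "h \<in> permgroup ds" "gs \<in> gtuples ds K" for h gs
    using integrable_act[OF ginv_in_permgroup F] integral_act[OF ginv_in_permgroup F] that by auto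
  have orbit_sum: "HK_orbit_sum ds q K = (\<lambda>\<omega>. \<Sum>h\<in>permgroup ds. \<Sum>gs\<in>gtuples ds K. F gs (act (ginv h) \<omega>))"
    by (simp add: fun_eq_iff HK_orbit_sum_eq_sum_act F_def)
  show "integrable (wspace ds) (HK_orbit_sum ds q K)"
    unfolding orbit_sum by (intro Bochner_Integration.integrable_sum F_act)
  have "(\<integral>\<omega>. HK_orbit_sum ds q K \<omega> \<partial>wspace ds)
      = (\<Sum>h\<in>permgroup ds. \<Sum>gs\<in>gtuples ds K. \<integral>\<omega>. F gs \<omega> \<partial>wspace ds)"
    unfolding orbit_sum by (simp add: Bochner_Integration.integral_sum F_act)
  also have "\<dots> = card (permgroup ds) * (\<Sum>gs\<in>gtuples ds K. \<integral>\<omega>. F gs \<omega> \<partial>wspace ds)"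
    by simp
  finally have orbit_integral: "(\<integral>\<omega>. HK_orbit_sum ds q K \<omega> \<partial>wspace ds)
      = card (permgroup ds) * (\<Sum>gs\<in>gtuples ds K. \<integral>\<omega>. F gs \<omega> \<partial>wspace ds)" .
  have "HK ds q K = (\<integral>\<omega>. (1 / card (gtuples ds K)) * (\<Sum>gs\<in>gtuples ds K. F gs \<omega>) \<partial>wspace ds)"
    unfolding HK_def F_def by (simp add: sum_distrib_left mult_ac)
  also have "\<dots> = (\<Sum>gs\<in>gtuples ds K. \<integral>\<omega>. F gs \<omega> \<partial>wspace ds) / card (gtuples ds K)"
    by (simp add: Bochner_Integration.integral_sum F)
  finally show "HK ds q K = (\<integral>\<omega>. HK_orbit_sum ds q K \<omega> \<partial>wspace ds) / (card (permgroup ds) * card (gtuples ds K))"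
    using card_permgroup_pos[of ds] by (simp add: orbit_integral)
qed

lemma
  assumes "1 \<le> K" and q_nonneg: "\<forall>\<omega>\<in>space (wspace ds). 0 \<le> q \<omega>" and \<omega>: "\<omega> \<in> space (wspace ds)"
  defines "N \<equiv> real (card (permgroup ds) * card (gtuples ds K))" and "m \<equiv> symdens ds q \<omega>"
  shows HK_orbit_sum_le: "HK_orbit_sum ds q K \<omega> \<le> - N * (m * ln m)"
    and HK_orbit_sum_ge: "- N * (m * ln m + m * ln (1 + card (permgroup ds) / K)) \<le> HK_orbit_sum ds q K \<omega>"
proof -
  interpret tuple_average "permgroup ds" "\<lambda>g. q (act (ginv g) \<omega>)" K
    using assms measurable_space[OF measurable_act[OF ginv_in_permgroup] \<omega>]
    by unfold_locales (auto simp: finite_permgroup permgroup_ne)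
  have "tuples = gtuples ds K"
    by (simp add: tuples_def gtuples_def)
  moreover have "mean = m"
    by (simp add: mean_def m_def symdens_def)
  moreover have "HK_orbit_sum ds q K \<omega>
      = (\<Sum>h\<in>permgroup ds. \<Sum>gs\<in>tuples. q (act (ginv h) \<omega>) * - ln (total h gs / K))"
    by (simp add: HK_orbit_sum_def total_def tuples_def gtuples_def)
  ultimately show "HK_orbit_sum ds q K \<omega> \<le> - N * (m * ln m)"
    and "- N * (m * ln m + m * ln (1 + card (permgroup ds) / K)) \<le> HK_orbit_sum ds q K \<omega>"
    using sum_neg_ln_total_le sum_neg_ln_total_ge by (simp_all add: N_def)
qed

lemma
  assumes q: "integrable (wspace ds) q"
  shows integrable_symdens: "integrable (wspace ds) (symdens ds q)"
    and integral_symdens: "(\<integral>\<omega>. symdens ds q \<omega> \<partial>wspace ds) = (\<integral>\<omega>. q \<omega> \<partial>wspace ds)"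
proof -
  have q_act: "integrable (wspace ds) (\<lambda>\<omega>. q (act (ginv g) \<omega>))"
      "(\<integral>\<omega>. q (act (ginv g) \<omega>) \<partial>wspace ds) = (\<integral>\<omega>. q \<omega> \<partial>wspace ds)"
    if "g \<in> permgroup ds" for g
    using integrable_act[OF ginv_in_permgroup q] integral_act[OF ginv_in_permgroup q] that by auto
  show "integrable (wspace ds) (symdens ds q)"
    unfolding symdens_def[abs_def] by (intro integrable_mult_right Bochner_Integration.integrable_sum q_act)
  show "(\<integral>\<omega>. symdens ds q \<omega> \<partial>wspace ds) = (\<integral>\<omega>. q \<omega> \<partial>wspace ds)"
    using card_permgroup_pos[of ds]
    by (simp add: symdens_def Bochner_Integration.integral_sum q_act)
qed

lemma HK_le_diff_entropy:
  assumes K: "1 \<le> K"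
    and q_nonneg: "\<forall>\<omega>\<in>space (wspace ds). 0 \<le> q \<omega>"
    and fin_HG: "integrable (wspace ds) (\<lambda>\<omega>. symdens ds q \<omega> * ln (symdens ds q \<omega>))"
    and fin_HK: "\<forall>gs\<in>gtuples ds K. integrable (wspace ds) (\<lambda>\<omega>. q \<omega> * HK_integrand ds q K gs \<omega>)"
  shows "HK ds q K \<le> diff_entropy (wspace ds) (symdens ds q)"
proof -
  let ?W = "wspace ds" and ?m = "symdens ds q" and ?H = "diff_entropy (wspace ds) (symdens ds q)"
  define N where "N = real (card (permgroup ds) * card (gtuples ds K))"
  have "(\<integral>\<omega>. HK_orbit_sum ds q K \<omega> \<partial>?W) \<le> (\<integral>\<omega>. - N * (?m \<omega> * ln (?m \<omega>)) \<partial>?W)"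
    using HK_orbit_sum_le[OF K q_nonneg]
    by (intro integral_mono integrable_HK_orbit_sum[OF fin_HK] integrable_mult_right fin_HG)
      (simp add: N_def)
  also have "\<dots> = N * ?H"
    by (simp add: diff_entropy_def)
  finally show ?thesis
    using card_permgroup_pos card_gtuples_pos HK_eq_integral_HK_orbit_sum[OF fin_HK]
    by (simp add: N_def divide_le_eq mult.commute)
qed

lemma diff_entropy_le_HK:
  assumes K: "1 \<le> K"
    and q_nonneg: "\<forall>\<omega>\<in>space (wspace ds). 0 \<le> q \<omega>"
    and q_int: "integrable (wspace ds) q"
    and q_norm: "(\<integral>\<omega>. q \<omega> \<partial>wspace ds) = 1"
    and fin_HG: "integrable (wspace ds) (\<lambda>\<omega>. symdens ds q \<omega> * ln (symdens ds q \<omega>))"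
    and fin_HK: "\<forall>gs\<in>gtuples ds K. integrable (wspace ds) (\<lambda>\<omega>. q \<omega> * HK_integrand ds q K gs \<omega>)"
  shows "diff_entropy (wspace ds) (symdens ds q) - ln (1 + card (permgroup ds) / K) \<le> HK ds q K"
proof -
  let ?W = "wspace ds" and ?m = "symdens ds q" and ?H = "diff_entropy (wspace ds) (symdens ds q)"
    and ?c = "ln (1 + card (permgroup ds) / K)"
  define N where "N = real (card (permgroup ds) * card (gtuples ds K))"
  have "N * (?H - ?c) = (\<integral>\<omega>. - N * (?m \<omega> * ln (?m \<omega>)) - N * ?c * ?m \<omega> \<partial>?W)"
    using fin_HG integrable_symdens[OF q_int] integral_symdens[OF q_int] q_norm
    by (simp add: diff_entropy_def algebra_simps)
  also have "\<dots> \<le> (\<integral>\<omega>. HK_orbit_sum ds q K \<omega> \<partial>?W)"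
    using HK_orbit_sum_ge[OF K q_nonneg]
    by (intro integral_mono integrable_HK_orbit_sum[OF fin_HK] Bochner_Integration.integrable_diff
        integrable_mult_right fin_HG integrable_symdens[OF q_int])
      (simp add: N_def algebra_simps)
  finally show ?thesis
    using card_permgroup_pos card_gtuples_pos HK_eq_integral_HK_orbit_sum[OF fin_HK]
    by (simp add: N_def le_divide_eq mult.commute)
qed

theorem theorem4p3:
  fixes ds :: "nat list" and q :: "(widx \<Rightarrow> real) \<Rightarrow> real"
  assumes L: "length ds \<ge> 2"
    and widths: "\<forall>l < length ds. ds ! l \<ge> 1"
    and q_meas: "q \<in> borel_measurable (wspace ds)"
    and q_nonneg: "\<forall>\<omega>\<in>space (wspace ds). q \<omega> \<ge> 0"
    and q_int: "integrable (wspace ds) q"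
    and q_norm: "(\<integral>\<omega>. q \<omega> \<partial>wspace ds) = 1"
    and fin_HG: "integrable (wspace ds) (\<lambda>\<omega>. symdens ds q \<omega> * ln (symdens ds q \<omega>))"
    and fin_HK: "\<forall>K\<ge>1. \<forall>gs\<in>gtuples ds K.
                   integrable (wspace ds) (\<lambda>\<omega>. q \<omega> * HK_integrand ds q K gs \<omega>)"
  shows "(\<forall>K\<ge>1. HK ds q K \<le> diff_entropy (wspace ds) (symdens ds q))
         \<and> (\<lambda>K. HK ds q K) \<longlonglongrightarrow> diff_entropy (wspace ds) (symdens ds q)"
proof -
  let ?H = "diff_entropy (wspace ds) (symdens ds q)" and ?n = "card (permgroup ds)"
  have upper: "HK ds q K \<le> ?H" if "1 \<le> K" for K
    using HK_le_diff_entropy[OF that q_nonneg fin_HG] fin_HK that by blast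
  have lower: "?H - ln (1 + ?n / K) \<le> HK ds q K" if "1 \<le> K" for K
    using diff_entropy_le_HK[OF that q_nonneg q_int q_norm fin_HG] fin_HK that by blast
  have "(\<lambda>K. ?H - ln (1 + ?n / K)) \<longlonglongrightarrow> ?H - ln (1 + 0)"
    by (intro tendsto_intros lim_const_over_n) auto
  then have "(\<lambda>K. ?H - ln (1 + ?n / K)) \<longlonglongrightarrow> ?H"
    by simp
  then have "(\<lambda>K. HK ds q K) \<longlonglongrightarrow> ?H"
  proof (rule tendsto_sandwich[rotated 2, OF _ tendsto_const])
    show "\<forall>\<^sub>F K in sequentially. ?H - ln (1 + ?n / K) \<le> HK ds q K"
      using lower by (intro eventually_sequentiallyI[of 1])
    show "\<forall>\<^sub>F K in sequentially. HK ds q K \<le> ?H"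
      using upper by (intro eventually_sequentiallyI[of 1])
  qed
  with upper show ?thesis
    by blast
qed

end
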